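(* Let $\{(\mathbf{x}_i,\mathbf{v}_i)\}_{i=1}^N$ be a global smooth solution of the Cucker–Smale model with bonding force $$\dot{\mathbf{x}}_i=\mathbf{v}_i,\qquad \dot{\mathbf{v}}_i=\frac{\kappa_0}{N}\sum_{j=1}^N\psi(\|\mathbf{x}_j-\mathbf{x}_i\|)(\mathbf{v}_j-\mathbf{v}_i)+\frac{\kappa_1}{N}\sum_{j\ne i}\Big\langle\mathbf{v}_j-\mathbf{v}_i,\frac{\mathbf{x}_j-\mathbf{x}_i}{\|\mathbf{x}_j-\mathbf{x}_i\|}\Big\rangle\frac{\mathbf{x}_j-\mathbf{x}_i}{\|\mathbf{x}_j-\mathbf{x}_i\|}+\frac{\kappa_2}{N}\sum_{j\ne i}\big(\|\mathbf{x}_j-\mathbf{x}_i\|-d^\infty_{ij}\big)\frac{\mathbf{x}_j-\mathbf{x}_i}{\|\mathbf{x}_j-\mathbf{x}_i\|}.$$ Then for all $i,j\in[N]$, $$\sup_{t\ge0}\Big|\frac{d}{dt}\|\mathbf{v}_i(t)-\mathbf{v}_j(t)\|^2\Big|<\infty.$$ In particular, $t\mapsto\|\mathbf{v}_i(t)-\mathbf{v}_j(t)\|^2$ is uniformly continuous on $[0,\infty)$.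
   Context: $N\ge2$, $d\ge1$, Euclidean norm and inner product on $\mathbb{R}^d$; $\kappa_0,\kappa_1,\kappa_2\ge0$; $[d^\infty_{ij}]$ real symmetric with zero diagonal. $E:=\frac12\sum_i\|\mathbf{v}_i\|^2+\frac{\kappa_2}{4N}\sum_{i,j}(\|\mathbf{x}_j-\mathbf{x}_i\|-d^\infty_{ij})^2$, $U:=\max_{i\ne j}d^\infty_{ij}+\sqrt{2NE(0)/\kappa_2}$. The weight $\psi:[0,\infty)\to[0,\infty)$ is locally Lipschitz with $0\le\psi(r)\le\psi_M$ for all $r\ge0$ and $\min_{r\in[0,U]}\psi(r)>0$. A global smooth solution is a $C^1$ solution on $[0,\infty)$ with $\mathbf{x}_i(t)\ne\mathbf{x}_j(t)$ for $i\ne j$. *)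

theory Defs
  imports "HOL-Analysis.Analysis"
begin

definition cs_accel ::
  "nat \<Rightarrow> real \<Rightarrow> real \<Rightarrow> real \<Rightarrow> (real \<Rightarrow> real) \<Rightarrow> (nat \<Rightarrow> nat \<Rightarrow> real)
   \<Rightarrow> (nat \<Rightarrow> 'a::euclidean_space) \<Rightarrow> (nat \<Rightarrow> 'a) \<Rightarrow> nat \<Rightarrow> 'a" where
  "cs_accel N k0 k1 k2 \<psi> dinf X V i =
     (k0 / real N) *\<^sub>R (\<Sum>j<N. \<psi> (norm (X j - X i)) *\<^sub>R (V j - V i))
   + (k1 / real N) *\<^sub>R (\<Sum>j\<in>{..<N} - {i}.
        (inner (V j - V i) ((1 / norm (X j - X i)) *\<^sub>R (X j - X i)))
          *\<^sub>R ((1 / norm (X j - X i)) *\<^sub>R (X j - X i)))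
   + (k2 / real N) *\<^sub>R (\<Sum>j\<in>{..<N} - {i}.
        (norm (X j - X i) - dinf i j) *\<^sub>R ((1 / norm (X j - X i)) *\<^sub>R (X j - X i)))"

definition cs_energy ::
  "nat \<Rightarrow> real \<Rightarrow> (nat \<Rightarrow> nat \<Rightarrow> real) \<Rightarrow> (nat \<Rightarrow> 'a::euclidean_space) \<Rightarrow> (nat \<Rightarrow> 'a) \<Rightarrow> real" where
  "cs_energy N k2 dinf X V =
     (1/2) * (\<Sum>i<N. (norm (V i))\<^sup>2)
   + (k2 / (4 * real N)) * (\<Sum>i<N. \<Sum>j<N. (norm (X j - X i) - dinf i j)\<^sup>2)"

definition cs_U :: "nat \<Rightarrow> real \<Rightarrow> (nat \<Rightarrow> nat \<Rightarrow> real) \<Rightarrow> real \<Rightarrow> real" where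
  "cs_U N k2 dinf E0 =
     Max {dinf i j | i j. i < N \<and> j < N \<and> i \<noteq> j} + sqrt (2 * real N * E0 / k2)"

end

theory Submission
  imports Defs
begin

text \<open>The total energy E (kinetic plus bond potential) is non-increasing along the flow:
pairing the force exerted by j on i with the one exerted by i on j turns dE/dt into
minus a sum of squares, and the bonding term cancels exactly against the derivative
of the potential. Hence E(t) \<le> E(0), which bounds every speed by sqrt(2 E(0)) and
every weighted bond defect k2 |\<parallel>x_j - x_i\<parallel> - d_ij| by sqrt(4 N k2 E(0)).
Since \<psi> is bounded, the accelerations are then uniformly bounded, and so is the
derivative 2 <v_i - v_j, a_i - a_j> of \<parallel>v_i - v_j\<parallel>^2, which is therefore
Lipschitz and in particular uniformly continuous on [0, \<infinity>).\<close>

lemma has_real_derivative_norm_power2: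
  assumes "(f has_vector_derivative f') (at t within S)"
  shows "((\<lambda>s. (norm (f s))\<^sup>2) has_real_derivative 2 * inner (f t) f') (at t within S)"
  using bounded_bilinear.has_vector_derivative[OF bounded_bilinear_inner assms assms]
  by (simp add: has_real_derivative_iff_has_vector_derivative power2_norm_eq_inner inner_commute)

lemma has_real_derivative_norm:
  assumes "(f has_vector_derivative f') (at t within S)" and "f t \<noteq> 0"
  shows "((\<lambda>s. norm (f s)) has_real_derivative inner f' (sgn (f t))) (at t within S)"
  using has_derivative_compose[OF assms(1)[unfolded has_vector_derivative_def]
      has_derivative_norm[OF assms(2)]]
  unfolding has_field_derivative_def
  by (rule has_derivative_eq_rhs) (simp_all add: fun_eq_iff)

lemma has_real_derivative_nonpos_imp_le:
  fixes f :: "real \<Rightarrow> real"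
  assumes "\<And>s. a \<le> s \<Longrightarrow> (f has_real_derivative f' s) (at s within {a..})"
    and "\<And>s. a \<le> s \<Longrightarrow> f' s \<le> 0" and "a \<le> t"
  shows "f t \<le> f a"
proof -
  have "(f has_derivative (\<lambda>h. f' s * h)) (at s within {a..t})" if "a \<le> s" for s
    using DERIV_subset[OF assms(1)[OF that], of "{a..t}"] by (auto simp: has_field_derivative_def)
  then obtain s where "s \<in> {a..t}" "f t - f a = f' s * (t - a)"
    using mvt_very_simple[OF \<open>a \<le> t\<close>, of f "\<lambda>s h. f' s * h"] by auto
  moreover have "f' s * (t - a) \<le> 0"
    using assms(2) \<open>s \<in> {a..t}\<close> by (simp add: mult_nonpos_nonneg)
  ultimately show ?thesis
    by simp
qed

lemma has_real_derivative_bounded_imp_lipschitz_on: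
  fixes f :: "real \<Rightarrow> real"
  assumes "convex S" and "\<And>s. s \<in> S \<Longrightarrow> (f has_real_derivative f' s) (at s within S)"
    and "\<And>s. s \<in> S \<Longrightarrow> \<bar>f' s\<bar> \<le> C" and "0 \<le> C"
  shows "C-lipschitz_on S f"
proof (rule lipschitz_onI)
  fix s u assume "s \<in> S" "u \<in> S"
  have "norm (f s - f u) \<le> C * norm (s - u)"
  proof (rule differentiable_bound[OF \<open>convex S\<close>])
    show "(f has_derivative (\<lambda>h. f' r * h)) (at r within S)" if "r \<in> S" for r
      using assms(2)[OF that] by (simp add: has_field_derivative_def)
    show "onorm (\<lambda>h. f' r * h) \<le> C" if "r \<in> S" for r
      by (rule onorm_le) (use assms(3)[OF that] in \<open>simp add: abs_mult mult_right_mono\<close>)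
  qed fact+
  then show "dist (f s) (f u) \<le> C * dist s u"
    by (simp add: dist_norm)
qed fact

lemma sum_inner_sum_antisym:
  fixes G :: "'i \<Rightarrow> 'i \<Rightarrow> 'a::real_inner"
  assumes "finite I" and "\<And>i j. i \<in> I \<Longrightarrow> j \<in> I \<Longrightarrow> G j i = - G i j"
  shows "(\<Sum>i\<in>I. inner (V i) (\<Sum>j\<in>I. G i j))
    = - (\<Sum>i\<in>I. \<Sum>j\<in>I. inner (V j - V i) (G i j)) / 2"
proof -
  have "(\<Sum>i\<in>I. \<Sum>j\<in>I. inner (V i) (G i j)) = (\<Sum>i\<in>I. \<Sum>j\<in>I. inner (V j) (G j i))"
    by (rule sum.swap)
  also have "\<dots> = - (\<Sum>i\<in>I. \<Sum>j\<in>I. inner (V j) (G i j))"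
  proof -
    have "inner (V j) (G j i) = - inner (V j) (G i j)" if "i \<in> I" "j \<in> I" for i j
      using assms(2)[OF that] by simp
    then show ?thesis
      by (simp add: sum_negf)
  qed
  finally show ?thesis
    by (simp add: inner_sum_right inner_diff_left sum_subtractf)
qed

definition cs_pair_force ::
  "real \<Rightarrow> real \<Rightarrow> real \<Rightarrow> (real \<Rightarrow> real) \<Rightarrow> (nat \<Rightarrow> nat \<Rightarrow> real)
   \<Rightarrow> (nat \<Rightarrow> 'a::euclidean_space) \<Rightarrow> (nat \<Rightarrow> 'a) \<Rightarrow> nat \<Rightarrow> nat \<Rightarrow> 'a" where
  "cs_pair_force k0 k1 k2 \<psi> dinf X V i j =
     (k0 * \<psi> (norm (X j - X i))) *\<^sub>R (V j - V i)
   + (k1 * inner (V j - V i) (sgn (X j - X i)) + k2 * (norm (X j - X i) - dinf i j))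
       *\<^sub>R sgn (X j - X i)"

(* (1 / norm w) *\<^sub>R w is sgn w, which vanishes at w = 0; hence the j = i summand of the
   sums over j \<noteq> i in cs_accel is zero and they may run over all j. *)
lemma cs_accel_eq_sum_pair_force:
  assumes "i < N"
  shows "cs_accel N k0 k1 k2 \<psi> dinf X V i
    = (1 / real N) *\<^sub>R (\<Sum>j<N. cs_pair_force k0 k1 k2 \<psi> dinf X V i j)"
proof -
  have unit: "(1 / norm w) *\<^sub>R w = sgn w" for w :: 'a
    by (simp add: sgn_div_norm inverse_eq_divide)
  have drop_i: "(\<Sum>j\<in>{..<N} - {i}. g j *\<^sub>R sgn (X j - X i)) = (\<Sum>j<N. g j *\<^sub>R sgn (X j - X i))"
    for g :: "nat \<Rightarrow> real"
    using assms by (simp add: sum_diff1)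
  show ?thesis
    unfolding cs_accel_def cs_pair_force_def unit drop_i
    by (simp add: sum.distrib scaleR_add_left scaleR_add_right scaleR_sum_right)
qed

lemma cs_pair_force_antisym:
  assumes "dinf i j = dinf j i"
  shows "cs_pair_force k0 k1 k2 \<psi> dinf X V j i = - cs_pair_force k0 k1 k2 \<psi> dinf X V i j"
proof -
  have "X i - X j = - (X j - X i)" "V i - V j = - (V j - V i)"
    by simp_all
  then show ?thesis
    unfolding cs_pair_force_def
    by (simp only: norm_minus_cancel sgn_minus inner_minus_left inner_minus_right assms)
      (simp add: algebra_simps)
qed

lemma cs_energy_dissipation:
  fixes X V :: "nat \<Rightarrow> 'a::euclidean_space"
  assumes dsym: "\<And>i j. i < N \<Longrightarrow> j < N \<Longrightarrow> dinf i j = dinf j i"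
  shows "(\<Sum>i<N. inner (V i) (cs_accel N k0 k1 k2 \<psi> dinf X V i))
      + k2 / (2 * real N) * (\<Sum>i<N. \<Sum>j<N.
          (norm (X j - X i) - dinf i j) * inner (V j - V i) (sgn (X j - X i)))
    = - (\<Sum>i<N. \<Sum>j<N. k0 * \<psi> (norm (X j - X i)) * (norm (V j - V i))\<^sup>2
          + k1 * (inner (V j - V i) (sgn (X j - X i)))\<^sup>2) / (2 * real N)"
proof -
  let ?G = "cs_pair_force k0 k1 k2 \<psi> dinf X V"
  let ?D = "\<lambda>i j. k0 * \<psi> (norm (X j - X i)) * (norm (V j - V i))\<^sup>2
          + k1 * (inner (V j - V i) (sgn (X j - X i)))\<^sup>2"
  let ?B = "\<lambda>i j. (norm (X j - X i) - dinf i j) * inner (V j - V i) (sgn (X j - X i))"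
  have pair: "inner (V j - V i) (?G i j) = ?D i j + k2 * ?B i j" for i j
  proof -
    have "inner (V j - V i) (?G i j) = k0 * \<psi> (norm (X j - X i)) * (norm (V j - V i))\<^sup>2
        + (k1 * inner (V j - V i) (sgn (X j - X i)) + k2 * (norm (X j - X i) - dinf i j))
          * inner (V j - V i) (sgn (X j - X i))"
      by (simp add: cs_pair_force_def inner_add_right dot_square_norm)
    then show ?thesis
      by (simp add: power2_eq_square algebra_simps)
  qed
  have "(\<Sum>i<N. inner (V i) (cs_accel N k0 k1 k2 \<psi> dinf X V i))
      = (\<Sum>i<N. inner (V i) (\<Sum>j<N. ?G i j)) / real N"
    by (simp add: cs_accel_eq_sum_pair_force sum_divide_distrib)
  also have "\<dots> = - (\<Sum>i<N. \<Sum>j<N. inner (V j - V i) (?G i j)) / (2 * real N)"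
    by (subst sum_inner_sum_antisym) (auto intro: cs_pair_force_antisym dsym)
  also have "\<dots> = - (\<Sum>i<N. \<Sum>j<N. ?D i j + k2 * ?B i j) / (2 * real N)"
    by (simp only: pair)
  also have "\<dots> = - ((\<Sum>i<N. \<Sum>j<N. ?D i j) + k2 * (\<Sum>i<N. \<Sum>j<N. ?B i j)) / (2 * real N)"
    by (simp only: sum.distrib sum_distrib_left)
  finally have sum_eq: "(\<Sum>i<N. inner (V i) (cs_accel N k0 k1 k2 \<psi> dinf X V i))
      = - ((\<Sum>i<N. \<Sum>j<N. ?D i j) + k2 * (\<Sum>i<N. \<Sum>j<N. ?B i j)) / (2 * real N)" .
  have "x + k2 / c * b = - a / c" if "x = - (a + k2 * b) / c" for x a b c :: real
    using that by (simp add: diff_divide_distrib)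
  from this[OF sum_eq] show ?thesis .
qed

lemma norm_le_sqrt_cs_energy:
  assumes "0 \<le> k2" and "i < N"
  shows "norm (V i) \<le> sqrt (2 * cs_energy N k2 dinf X V)"
proof (rule real_le_rsqrt)
  have "(norm (V i))\<^sup>2 \<le> (\<Sum>i<N. (norm (V i))\<^sup>2)"
    by (rule member_le_sum) (use assms in auto)
  moreover have "0 \<le> k2 / (4 * real N) * (\<Sum>i<N. \<Sum>j<N. (norm (X j - X i) - dinf i j)\<^sup>2)"
    using assms by (simp add: sum_nonneg)
  ultimately show "(norm (V i))\<^sup>2 \<le> 2 * cs_energy N k2 dinf X V"
    unfolding cs_energy_def distrib_left by linarith
qed

lemma bond_defect_le_sqrt_cs_energy:
  assumes "0 \<le> k2" and "i < N" and "j < N"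
  shows "k2 * \<bar>norm (X j - X i) - dinf i j\<bar> \<le> sqrt (4 * real N * k2 * cs_energy N k2 dinf X V)"
proof (rule real_le_rsqrt)
  let ?d = "\<lambda>i j. (norm (X j - X i) - dinf i j)\<^sup>2"
  have energy_eq: "4 * real N * cs_energy N k2 dinf X V
      = 2 * real N * (\<Sum>i<N. (norm (V i))\<^sup>2) + k2 * (\<Sum>i<N. \<Sum>j<N. ?d i j)"
    using assms(2) by (simp add: cs_energy_def field_simps)
  have "?d i j \<le> (\<Sum>j<N. ?d i j)"
    by (rule member_le_sum) (use assms in auto)
  also have "\<dots> \<le> (\<Sum>i<N. \<Sum>j<N. ?d i j)"
    by (rule member_le_sum[where f = "\<lambda>i. \<Sum>j<N. ?d i j"]) (use assms in \<open>auto intro: sum_nonneg\<close>)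
  finally have "k2 * ?d i j \<le> k2 * (\<Sum>i<N. \<Sum>j<N. ?d i j)"
    using assms(1) by (rule mult_left_mono)
  also have "\<dots> \<le> 4 * real N * cs_energy N k2 dinf X V"
    unfolding energy_eq by (simp add: sum_nonneg)
  finally have "k2 * (k2 * ?d i j) \<le> k2 * (4 * real N * cs_energy N k2 dinf X V)"
    using assms(1) by (rule mult_left_mono)
  then show "(k2 * \<bar>norm (X j - X i) - dinf i j\<bar>)\<^sup>2 \<le> 4 * real N * k2 * cs_energy N k2 dinf X V"
    by (simp add: power_mult_distrib power2_eq_square mult_ac)
qed

lemma norm_cs_pair_force_le:
  assumes "0 \<le> k0" and "0 \<le> k1" and "0 \<le> k2"
    and "0 \<le> \<psi> (norm (X j - X i))" and "\<psi> (norm (X j - X i)) \<le> \<psi>M"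
    and "norm (V j - V i) \<le> W" and "k2 * \<bar>norm (X j - X i) - dinf i j\<bar> \<le> P"
  shows "norm (cs_pair_force k0 k1 k2 \<psi> dinf X V i j) \<le> k0 * \<psi>M * W + k1 * W + P"
proof -
  let ?e = "sgn (X j - X i)"
  let ?c = "k1 * inner (V j - V i) ?e + k2 * (norm (X j - X i) - dinf i j)"
  have e: "norm ?e \<le> 1"
    by (simp add: norm_sgn)
  have "\<bar>inner (V j - V i) ?e\<bar> \<le> norm (V j - V i) * norm ?e"
    by (rule Cauchy_Schwarz_ineq2)
  also have "\<dots> \<le> W"
    using mult_right_le_one_le[of "norm (V j - V i)", OF norm_ge_zero norm_ge_zero e] assms(6)
    by linarith
  finally have "k1 * \<bar>inner (V j - V i) ?e\<bar> \<le> k1 * W"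
    using assms(2) by (rule mult_left_mono)
  then have "\<bar>?c\<bar> \<le> k1 * W + P"
    using assms(2,3,7) abs_triangle_ineq[of "k1 * inner (V j - V i) ?e" "k2 * (norm (X j - X i) - dinf i j)"]
    by (simp add: abs_mult)
  then have "norm (?c *\<^sub>R ?e) \<le> k1 * W + P"
    using mult_right_le_one_le[OF abs_ge_zero norm_ge_zero e, of ?c] by simp
  moreover have "k0 * \<psi> (norm (X j - X i)) * norm (V j - V i) \<le> k0 * \<psi>M * W"
    using assms(1,4-6) by (intro mult_mono mult_left_mono) auto
  then have "norm ((k0 * \<psi> (norm (X j - X i))) *\<^sub>R (V j - V i)) \<le> k0 * \<psi>M * W"
    using assms(1,4) by simp
  moreover have "norm (cs_pair_force k0 k1 k2 \<psi> dinf X V i j)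
      \<le> norm ((k0 * \<psi> (norm (X j - X i))) *\<^sub>R (V j - V i)) + norm (?c *\<^sub>R ?e)"
    unfolding cs_pair_force_def by (rule norm_triangle_ineq)
  ultimately show ?thesis
    by linarith
qed

lemma norm_cs_accel_le:
  assumes "i < N" and "\<And>j. j < N \<Longrightarrow> norm (cs_pair_force k0 k1 k2 \<psi> dinf X V i j) \<le> F"
  shows "norm (cs_accel N k0 k1 k2 \<psi> dinf X V i) \<le> F"
proof -
  have "norm (\<Sum>j<N. cs_pair_force k0 k1 k2 \<psi> dinf X V i j)
      \<le> (\<Sum>j<N. norm (cs_pair_force k0 k1 k2 \<psi> dinf X V i j))"
    by (rule norm_sum)
  also have "\<dots> \<le> real N * F"
    using sum_mono[of "{..<N}", OF assms(2)] by simp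
  finally show ?thesis
    using assms(1) by (simp add: cs_accel_eq_sum_pair_force pos_divide_le_eq mult.commute)
qed

locale cs_solution =
  fixes N :: nat and k0 k1 k2 :: real and \<psi> :: "real \<Rightarrow> real" and \<psi>M :: real
    and dinf :: "nat \<Rightarrow> nat \<Rightarrow> real" and x v :: "nat \<Rightarrow> real \<Rightarrow> 'a::euclidean_space"
  assumes k0_nonneg: "0 \<le> k0" and k1_nonneg: "0 \<le> k1" and k2_nonneg: "0 \<le> k2"
    and dinf_sym: "\<And>i j. i < N \<Longrightarrow> j < N \<Longrightarrow> dinf i j = dinf j i"
    and dinf_diag: "\<And>i. i < N \<Longrightarrow> dinf i i = 0"
    and psi_bounded: "\<And>r. 0 \<le> r \<Longrightarrow> 0 \<le> \<psi> r \<and> \<psi> r \<le> \<psi>M"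
    and x_deriv: "\<And>i t. i < N \<Longrightarrow> 0 \<le> t \<Longrightarrow> (x i has_vector_derivative v i t) (at t within {0..})"
    and v_deriv: "\<And>i t. i < N \<Longrightarrow> 0 \<le> t \<Longrightarrow>
      (v i has_vector_derivative cs_accel N k0 k1 k2 \<psi> dinf (\<lambda>j. x j t) (\<lambda>j. v j t) i)
        (at t within {0..})"
    and x_distinct: "\<And>i j t. i < N \<Longrightarrow> j < N \<Longrightarrow> i \<noteq> j \<Longrightarrow> 0 \<le> t \<Longrightarrow> x i t \<noteq> x j t"
begin

definition accel :: "nat \<Rightarrow> real \<Rightarrow> 'a" where
  "accel i t = cs_accel N k0 k1 k2 \<psi> dinf (\<lambda>j. x j t) (\<lambda>j. v j t) i"

definition energy :: "real \<Rightarrow> real" where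
  "energy t = cs_energy N k2 dinf (\<lambda>i. x i t) (\<lambda>i. v i t)"

lemma energy_has_derivative:
  assumes "0 \<le> t"
  shows "(energy has_real_derivative
      (\<Sum>i<N. inner (v i t) (accel i t))
      + k2 / (2 * real N) * (\<Sum>i<N. \<Sum>j<N.
          (norm (x j t - x i t) - dinf i j) * inner (v j t - v i t) (sgn (x j t - x i t))))
    (at t within {0..})"
proof -
  have kinetic: "((\<lambda>s. (norm (v i s))\<^sup>2) has_real_derivative 2 * inner (v i t) (accel i t))
      (at t within {0..})" if "i < N" for i
    using has_real_derivative_norm_power2[OF v_deriv[OF that assms]] by (simp add: accel_def)
  have bond: "((\<lambda>s. (norm (x j s - x i s) - dinf i j)\<^sup>2) has_real_derivative
      2 * ((norm (x j t - x i t) - dinf i j) * inner (v j t - v i t) (sgn (x j t - x i t))))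
      (at t within {0..})" if "i < N" "j < N" for i j
  proof (cases "i = j")
    case True
    then show ?thesis
      using dinf_diag[OF that(1)] by simp
  next
    case False
    have "((\<lambda>s. norm (x j s - x i s)) has_real_derivative inner (v j t - v i t) (sgn (x j t - x i t)))
        (at t within {0..})"
      using has_real_derivative_norm[OF has_vector_derivative_diff[OF x_deriv x_deriv]]
        x_distinct[OF that(2,1)] False that assms by auto
    from DERIV_power[OF DERIV_diff[OF this DERIV_const], where n = 2] show ?thesis
      by (simp add: mult_ac)
  qed
  show ?thesis
    unfolding energy_def cs_energy_def
    by (rule DERIV_cong[OF DERIV_add[OF DERIV_cmult[OF DERIV_sum[OF kinetic]]
          DERIV_cmult[OF DERIV_sum[OF DERIV_sum[OF bond]]]]])
      (simp_all add: sum_distrib_left[symmetric])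
qed

lemma energy_le_initial:
  assumes "0 \<le> t"
  shows "energy t \<le> energy 0"
proof (rule has_real_derivative_nonpos_imp_le[OF energy_has_derivative _ assms])
  fix s :: real
  assume "0 \<le> s"
  have "0 \<le> (\<Sum>i<N. \<Sum>j<N. k0 * \<psi> (norm (x j s - x i s)) * (norm (v j s - v i s))\<^sup>2
      + k1 * (inner (v j s - v i s) (sgn (x j s - x i s)))\<^sup>2)"
    using k0_nonneg k1_nonneg psi_bounded by (intro sum_nonneg add_nonneg_nonneg mult_nonneg_nonneg) auto
  then show "(\<Sum>i<N. inner (v i s) (accel i s))
      + k2 / (2 * real N) * (\<Sum>i<N. \<Sum>j<N.
          (norm (x j s - x i s) - dinf i j) * inner (v j s - v i s) (sgn (x j s - x i s))) \<le> 0"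
    using cs_energy_dissipation[OF dinf_sym, where X = "\<lambda>j. x j s" and V = "\<lambda>j. v j s"]
    unfolding accel_def by (simp add: divide_nonneg_nonneg)
qed

definition speed_bound :: real where
  "speed_bound = sqrt (2 * energy 0)"

definition accel_bound :: real where
  "accel_bound = 2 * (k0 * \<psi>M + k1) * speed_bound + sqrt (4 * real N * k2 * energy 0)"

lemma speed_bounded:
  assumes "i < N" and "0 \<le> t"
  shows "norm (v i t) \<le> speed_bound"
proof -
  have "norm (v i t) \<le> sqrt (2 * energy t)"
    unfolding energy_def by (rule norm_le_sqrt_cs_energy[OF k2_nonneg assms(1)])
  also have "\<dots> \<le> speed_bound"
    using energy_le_initial[OF assms(2)] by (simp add: speed_bound_def)
  finally show ?thesis .
qed

lemma accel_bounded:
  assumes "i < N" and "0 \<le> t"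
  shows "norm (accel i t) \<le> accel_bound"
  unfolding accel_def
proof (rule norm_cs_accel_le[OF assms(1)])
  fix j
  assume "j < N"
  have "k2 * \<bar>norm (x j t - x i t) - dinf i j\<bar> \<le> sqrt (4 * real N * k2 * energy t)"
    unfolding energy_def by (rule bond_defect_le_sqrt_cs_energy[OF k2_nonneg assms(1) \<open>j < N\<close>])
  also have "\<dots> \<le> sqrt (4 * real N * k2 * energy 0)"
    using energy_le_initial[OF assms(2)] k2_nonneg by (intro real_sqrt_le_mono mult_left_mono) auto
  finally have bond: "k2 * \<bar>norm (x j t - x i t) - dinf i j\<bar> \<le> sqrt (4 * real N * k2 * energy 0)" .
  have gap: "norm (v j t - v i t) \<le> 2 * speed_bound"
    using norm_triangle_ineq4[of "v j t" "v i t"] speed_bounded[OF \<open>j < N\<close> assms(2)]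
      speed_bounded[OF assms(1,2)] by linarith
  have "k0 * \<psi>M * (2 * speed_bound) + k1 * (2 * speed_bound) + sqrt (4 * real N * k2 * energy 0)
      = accel_bound"
    by (simp add: accel_bound_def algebra_simps)
  moreover have psi: "0 \<le> \<psi> (norm (x j t - x i t))" "\<psi> (norm (x j t - x i t)) \<le> \<psi>M"
    using psi_bounded[OF norm_ge_zero] by auto
  ultimately show "norm (cs_pair_force k0 k1 k2 \<psi> dinf (\<lambda>j. x j t) (\<lambda>j. v j t) i j) \<le> accel_bound"
    using norm_cs_pair_force_le[where X = "\<lambda>j. x j t" and V = "\<lambda>j. v j t"
        and \<psi> = \<psi> and dinf = dinf and i = i and j = j,
        OF k0_nonneg k1_nonneg k2_nonneg psi gap bond]
    by simp
qed

lemma velocity_gap_has_derivative: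
  assumes "i < N" and "j < N" and "0 \<le> t"
  shows "((\<lambda>s. (norm (v i s - v j s))\<^sup>2) has_real_derivative
      2 * inner (v i t - v j t) (accel i t - accel j t)) (at t within {0..})"
  using has_real_derivative_norm_power2[OF has_vector_derivative_diff[OF v_deriv v_deriv]] assms
  by (simp add: accel_def)

lemma velocity_gap_derivative_bounded:
  assumes "i < N" and "j < N" and "0 \<le> t"
  shows "\<bar>2 * inner (v i t - v j t) (accel i t - accel j t)\<bar> \<le> 8 * speed_bound * accel_bound"
proof -
  have v_gap: "norm (v i t - v j t) \<le> 2 * speed_bound"
    using norm_triangle_ineq4[of "v i t" "v j t"] speed_bounded[OF assms(1,3)] speed_bounded[OF assms(2,3)]
    by linarith
  have a_gap: "norm (accel i t - accel j t) \<le> 2 * accel_bound"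
    using norm_triangle_ineq4[of "accel i t" "accel j t"] accel_bounded[OF assms(1,3)]
      accel_bounded[OF assms(2,3)] by linarith
  have "norm (v i t - v j t) * norm (accel i t - accel j t) \<le> 2 * speed_bound * (2 * accel_bound)"
    by (intro mult_mono v_gap a_gap norm_ge_zero order_trans[OF norm_ge_zero v_gap])
  then show ?thesis
    using Cauchy_Schwarz_ineq2[of "v i t - v j t" "accel i t - accel j t"] by (simp add: abs_mult)
qed

end

theorem lemma4p1:
  fixes N :: nat and k0 k1 k2 \<psi>M :: real and \<psi> :: "real \<Rightarrow> real"
    and dinf :: "nat \<Rightarrow> nat \<Rightarrow> real"
    and x v :: "nat \<Rightarrow> real \<Rightarrow> 'a::euclidean_space"
  assumes N2: "N \<ge> 2"
    and k0: "k0 \<ge> 0" and k1: "k1 \<ge> 0" and k2: "k2 \<ge> 0"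
    and dsym: "\<And>i j. i < N \<Longrightarrow> j < N \<Longrightarrow> dinf i j = dinf j i"
    and ddiag: "\<And>i. i < N \<Longrightarrow> dinf i i = 0"
    and psi_lip: "\<And>R. R \<ge> 0 \<Longrightarrow> \<exists>L. L-lipschitz_on {0..R} \<psi>"
    and psi_bdd: "\<And>r. r \<ge> 0 \<Longrightarrow> 0 \<le> \<psi> r \<and> \<psi> r \<le> \<psi>M"
    and psi_pos: "\<exists>m>0. \<forall>r\<in>{0..cs_U N k2 dinf (cs_energy N k2 dinf (\<lambda>i. x i 0) (\<lambda>i. v i 0))}.
                     m \<le> \<psi> r"
    and xder: "\<And>i t. i < N \<Longrightarrow> t \<ge> 0 \<Longrightarrow> (x i has_vector_derivative v i t) (at t within {0..})"
    and vder: "\<And>i t. i < N \<Longrightarrow> t \<ge> 0 \<Longrightarrow>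
       (v i has_vector_derivative cs_accel N k0 k1 k2 \<psi> dinf (\<lambda>j. x j t) (\<lambda>j. v j t) i)
         (at t within {0..})"
    and distinct: "\<And>i j t. i < N \<Longrightarrow> j < N \<Longrightarrow> i \<noteq> j \<Longrightarrow> t \<ge> 0 \<Longrightarrow> x i t \<noteq> x j t"
    and i: "i < N" and j: "j < N"
  shows "(\<exists>C. \<forall>t\<ge>0. \<exists>D. ((\<lambda>s. (norm (v i s - v j s))\<^sup>2) has_real_derivative D) (at t within {0..})
                          \<and> \<bar>D\<bar> \<le> C)
       \<and> uniformly_continuous_on {0..} (\<lambda>s. (norm (v i s - v j s))\<^sup>2)"
proof -
  interpret cs_solution N k0 k1 k2 \<psi> \<psi>M dinf x v
    using k0 k1 k2 dsym ddiag psi_bdd xder vder distinct by unfold_locales auto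
  let ?f = "\<lambda>s. (norm (v i s - v j s))\<^sup>2"
  let ?f' = "\<lambda>t. 2 * inner (v i t - v j t) (accel i t - accel j t)"
  let ?C = "8 * speed_bound * accel_bound"
  have deriv: "(?f has_real_derivative ?f' t) (at t within {0..})" if "t \<in> {0..}" for t
    using velocity_gap_has_derivative[OF i j] that by simp
  have bound: "\<bar>?f' t\<bar> \<le> ?C" if "t \<in> {0..}" for t
    using velocity_gap_derivative_bounded[OF i j] that by simp
  have "0 \<le> ?C"
    using order_trans[OF abs_ge_zero bound[of 0]] by simp
  then have "?C-lipschitz_on {0..} ?f"
    using has_real_derivative_bounded_imp_lipschitz_on[of "{0..}" ?f ?f' ?C, OF convex_real_interval(1) deriv bound]
    by simp
  then have "uniformly_continuous_on {0..} ?f"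
    by (rule lipschitz_on_uniformly_continuous)
  moreover have "\<exists>C. \<forall>t\<ge>0. \<exists>D. (?f has_real_derivative D) (at t within {0..}) \<and> \<bar>D\<bar> \<le> C"
    using deriv bound by (intro exI[of _ ?C] allI impI exI[of _ "?f' t" for t]) auto
  ultimately show ?thesis
    by blast
qed

end
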